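(* Let $\beta>0$ and $\beta'>0$. For integers $k,l\geqslant 0$ define $$T_{l,k}=\int_{\mathbb{R}}H_{l}^{\beta'}(v)\,\mathcal{H}_{k}^{\beta}(v)\,\mathrm{d}v,$$ and set $T_{l,k}=0$ whenever $l<0$ or $k<0$. Then: (i) $T_{l,k}=0$ whenever $l<k$ or $l+k$ is odd; (ii) for all $k,l\geqslant 0$, $T_{l,k}=\frac{\beta}{\beta'}\sqrt{\frac{k+1}{l+1}}\,T_{l+1,k+1}$ and $T_{l,l}=\left(\frac{\beta'}{\beta}\right)^{l+\frac12}$; (iii) for all $l\geqslant 1$, $k\geqslant 0$, $$T_{l,k}=\frac{\beta'}{\beta}\sqrt{\frac{k+1}{l}}\,T_{l-1,k+1}+\frac{\beta'}{\beta}\sqrt{\frac{k}{l}}\,T_{l-1,k-1}-\sqrt{\frac{l-1}{l}}\,T_{l-2,k};$$ (iv) for all $l\geqslant 1$, $k\geqslant 0$ with $l\neq k$, $$T_{l,k}=\frac{\sqrt{l(k+1)}}{l-k}\left(\frac{\beta'}{\beta}-\frac{\beta}{\beta'}\right)T_{l-1,k+1}.$$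
   Context: $H_k$ denotes the (physicists') Hermite polynomial of degree $k\geqslant 0$, given by Rodrigues' formula $H_k(v)=(-1)^k e^{v^2}\frac{\mathrm{d}^k}{\mathrm{d}v^k}\big[e^{-v^2}\big]$. For a scaling factor $\beta>0$ and $k\geqslant 0$, the scaled Hermite polynomial and the scaled asymmetrically-weighted Hermite function are $$H_k^{\beta}(v)=\frac{\sqrt{\beta}}{(2\pi)^{1/4}\sqrt{2^k k!}}\,H_k\!\left(\frac{\beta v}{\sqrt2}\right),\qquad \mathcal{H}_k^{\beta}(v)=\frac{\sqrt{\beta}}{(2\pi)^{1/4}\sqrt{2^k k!}}\,H_k\!\left(\frac{\beta v}{\sqrt2}\right)e^{-\frac{\beta^2v^2}{2}},\qquad v\in\mathbb{R}.$$ *)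

theory Defs
  imports "HOL-Analysis.Analysis"
begin

definition hermite :: "nat \<Rightarrow> real \<Rightarrow> real" where
  "hermite k v = (-1) ^ k * exp (v\<^sup>2) * (deriv ^^ k) (\<lambda>x. exp (- (x\<^sup>2))) v"

definition hermite_norm :: "real \<Rightarrow> nat \<Rightarrow> real" where
  "hermite_norm \<beta> k = sqrt \<beta> / ((2 * pi) powr (1/4) * sqrt (2 ^ k * fact k))"

definition scaled_hermite :: "real \<Rightarrow> nat \<Rightarrow> real \<Rightarrow> real" where
  "scaled_hermite \<beta> k v = hermite_norm \<beta> k * hermite k (\<beta> * v / sqrt 2)"

definition scaled_hermite_fun :: "real \<Rightarrow> nat \<Rightarrow> real \<Rightarrow> real" where
  "scaled_hermite_fun \<beta> k v =
     hermite_norm \<beta> k * hermite k (\<beta> * v / sqrt 2) * exp (- (\<beta>\<^sup>2 * v\<^sup>2 / 2))"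

definition Tcoef :: "real \<Rightarrow> real \<Rightarrow> int \<Rightarrow> int \<Rightarrow> real" where
  "Tcoef \<beta> \<beta>' l k = (if l < 0 \<or> k < 0 then 0 else
     (\<integral>v. scaled_hermite \<beta>' (nat l) v * scaled_hermite_fun \<beta> (nat k) v \<partial>lborel))"

end

theory Submission
  imports Defs "HOL-Probability.Distributions" "HOL-Computational_Algebra.Polynomial"
    "HOL-Real_Asymp.Real_Asymp"
begin

(* Both scaled functions are polynomials, the second one times the Gaussian weight
   exp (- b^2 v^2 / 2), so every T_{l,k} is the Gaussian integral of a polynomial.
   Integrating by parts against the weight moves the derivative of H_l^{b'}, which is
   b' sqrt l H_{l-1}^{b'}, onto the other factor, where p |-> b^2 v p - p' raises H_k^b to
   b sqrt (k + 1) H_{k+1}^b.  The resulting ladder identity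
     b' sqrt l T_{l-1,k} = b sqrt (k + 1) T_{l,k+1}
   gives (ii), the vanishing below the diagonal (T_{0,k+1} = 0), and, together with the
   Gaussian integral T_{0,0} = sqrt (b'/b), the diagonal values.  Parity gives the odd case,
   the three-term recurrence applied to both factors gives (iii), and eliminating the two
   lower terms of (iii) with the ladder identity gives (iv). *)

fun hermite_poly :: "nat \<Rightarrow> real poly" where
  "hermite_poly 0 = 1"
| "hermite_poly (Suc 0) = [:0, 2:]"
| "hermite_poly (Suc (Suc n)) =
     [:0, 2:] * hermite_poly (Suc n) - smult (2 * (real n + 1)) (hermite_poly n)"

(* Here and below, the truncated index n - 1 at n = 0 is harmless: its coefficient vanishes. *)
lemma hermite_poly_Suc:
  "hermite_poly (Suc n) = [:0, 2:] * hermite_poly n - smult (2 * real n) (hermite_poly (n - 1))"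
  by (cases n) (simp_all add: algebra_simps)

lemma pderiv_hermite_poly: "pderiv (hermite_poly n) = smult (2 * real n) (hermite_poly (n - 1))"
proof (induction n rule: hermite_poly.induct)
  case (3 n)
  have "pderiv (hermite_poly (Suc (Suc n))) = smult 2 (hermite_poly (Suc n))
      + [:0, 2:] * pderiv (hermite_poly (Suc n)) - smult (2 * (real n + 1)) (pderiv (hermite_poly n))"
    by (simp only: hermite_poly.simps pderiv_diff pderiv_mult pderiv_smult) (simp add: pderiv_pCons)
  also have "\<dots> = smult (2 * real (Suc (Suc n))) (hermite_poly (Suc n))"
    unfolding "3.IH" diff_Suc_1 unfolding hermite_poly_Suc[of n]
    by (simp only: poly_eq_poly_eq_iff[symmetric] fun_eq_iff) (simp add: algebra_simps)
  finally show ?case by simp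
qed (simp_all add: pderiv_pCons)

lemma hermite_poly_Suc_pderiv:
  "hermite_poly (Suc n) = [:0, 2:] * hermite_poly n - pderiv (hermite_poly n)"
  by (simp add: hermite_poly_Suc pderiv_hermite_poly)

lemma deriv_funpow_gaussian:
  "(deriv ^^ k) (\<lambda>x. exp (- (x\<^sup>2)))
     = (\<lambda>x. (-1) ^ k * poly (hermite_poly k) x * exp (- (x\<^sup>2)))"
proof (induction k)
  case (Suc k)
  have "((\<lambda>x. (-1) ^ k * poly (hermite_poly k) x * exp (- (x\<^sup>2))) has_real_derivative
      (-1) ^ Suc k * poly (hermite_poly (Suc k)) x * exp (- (x\<^sup>2))) (at x)" for x
    by (auto intro!: derivative_eq_intros poly_DERIV simp: hermite_poly_Suc_pderiv algebra_simps)
  then show ?case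
    unfolding funpow.simps o_apply Suc.IH by (simp add: DERIV_imp_deriv fun_eq_iff)
qed simp

lemma hermite_eq_poly: "hermite k = poly (hermite_poly k)"
  unfolding hermite_def deriv_funpow_gaussian by (simp add: fun_eq_iff exp_minus field_simps)

lemma hermite_poly_minus: "poly (hermite_poly n) (- x) = (-1) ^ n * poly (hermite_poly n) x"
  by (induction n rule: hermite_poly.induct) (auto simp: algebra_simps)

definition gauss_integral :: "real \<Rightarrow> real poly \<Rightarrow> real" where
  "gauss_integral c p = (\<integral>x. poly p x * exp (- c * x\<^sup>2) \<partial>lborel)"

lemma normal_density_eq_gaussian:
  fixes c :: real
  assumes "c > 0"
  shows "normal_density 0 (1 / sqrt (2 * c)) = (\<lambda>x. sqrt (c / pi) * exp (- c * x\<^sup>2))"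
proof
  fix x
  have "2 * pi * (1 / sqrt (2 * c))\<^sup>2 = pi / c" "x\<^sup>2 / (2 * (1 / sqrt (2 * c))\<^sup>2) = c * x\<^sup>2"
    using assms by (simp_all add: power_divide)
  then show "normal_density 0 (1 / sqrt (2 * c)) x = sqrt (c / pi) * exp (- c * x\<^sup>2)"
    by (simp add: normal_density_def real_sqrt_divide)
qed

lemma integrable_monomial_gaussian:
  fixes c :: real
  assumes "c > 0"
  shows "integrable lborel (\<lambda>x. x ^ k * exp (- c * x\<^sup>2))"
proof -
  have "integrable lborel (\<lambda>x. normal_density 0 (1 / sqrt (2 * c)) x * (x - 0) ^ k)"
    using assms by (intro integrable_normal_moment) simp
  then have "integrable lborel
      (\<lambda>x. sqrt (pi / c) * (sqrt (c / pi) * exp (- c * x\<^sup>2) * (x - 0) ^ k))"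
    unfolding normal_density_eq_gaussian[OF assms] by (rule integrable_mult_right)
  then show ?thesis
    using assms by (simp add: real_sqrt_divide field_simps)
qed

lemma integrable_poly_gaussian:
  fixes c :: real
  assumes "c > 0"
  shows "integrable lborel (\<lambda>x. poly p x * exp (- c * x\<^sup>2))"
proof -
  have "integrable lborel (\<lambda>x. \<Sum>i\<le>degree p. coeff p i * (x ^ i * exp (- c * x\<^sup>2)))"
    using integrable_monomial_gaussian[OF assms]
    by (auto intro!: integrable_sum integrable_mult_right)
  then show ?thesis
    by (simp add: poly_altdef sum_distrib_right mult.assoc)
qed

lemma gauss_integral_add:
  "c > 0 \<Longrightarrow> gauss_integral c (p + q) = gauss_integral c p + gauss_integral c q"
  unfolding gauss_integral_def poly_add distrib_right
  by (intro Bochner_Integration.integral_add integrable_poly_gaussian)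

lemma gauss_integral_diff:
  "c > 0 \<Longrightarrow> gauss_integral c (p - q) = gauss_integral c p - gauss_integral c q"
  unfolding gauss_integral_def poly_diff left_diff_distrib
  by (intro Bochner_Integration.integral_diff integrable_poly_gaussian)

lemma gauss_integral_smult: "gauss_integral c (smult a p) = a * gauss_integral c p"
  unfolding gauss_integral_def by (simp add: mult.assoc)

lemma tendsto_poly_times_gaussian:
  fixes c :: real
  assumes "\<And>k. ((\<lambda>x. x ^ k * exp (- c * x\<^sup>2)) \<longlongrightarrow> 0) F"
  shows "((\<lambda>x. poly p x * exp (- c * x\<^sup>2)) \<longlongrightarrow> 0) F"
proof -
  have "((\<lambda>x. \<Sum>i\<le>degree p. coeff p i * (x ^ i * exp (- c * x\<^sup>2))) \<longlongrightarrow> 0) F"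
    using assms by (intro tendsto_null_sum tendsto_mult_right_zero)
  then show ?thesis
    by (simp add: poly_altdef sum_distrib_right mult.assoc)
qed

lemma gauss_integral_pderiv:
  fixes c :: real
  assumes c: "c > 0"
  shows "gauss_integral c (pderiv p) = 2 * c * gauss_integral c ([:0, 1:] * p)"
proof -
  let ?F = "\<lambda>x. poly p x * exp (- c * x\<^sup>2)"
  let ?f = "\<lambda>x. poly (pderiv p - smult (2 * c) ([:0, 1:] * p)) x * exp (- c * x\<^sup>2)"
  have "(?F \<longlongrightarrow> 0) at_bot" "(?F \<longlongrightarrow> 0) at_top"
    using c by (intro tendsto_poly_times_gaussian; real_asymp)+
  have "(LBINT x=-\<infinity>..\<infinity>. ?f x) = 0 - 0"
  proof (rule interval_integral_FTC_integrable)
    show "(?F has_vector_derivative ?f x) (at x)" for x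
      unfolding has_real_derivative_iff_has_vector_derivative[symmetric]
      by (auto intro!: derivative_eq_intros poly_DERIV simp: algebra_simps)
    show "set_integrable lborel (einterval (- \<infinity>) \<infinity>) ?f"
      using integrable_poly_gaussian[OF c, of "pderiv p - smult (2 * c) ([:0, 1:] * p)"]
      by (simp add: set_integrable_def)
    show "((?F \<circ> real_of_ereal) \<longlongrightarrow> 0) (at_right (- \<infinity>))"
      unfolding at_right_MInf tendsto_compose_filtermap filtermap_filtermap
      using \<open>(?F \<longlongrightarrow> 0) at_bot\<close> by simp
    show "((?F \<circ> real_of_ereal) \<longlongrightarrow> 0) (at_left \<infinity>)"
      unfolding at_left_PInf tendsto_compose_filtermap filtermap_filtermap
      using \<open>(?F \<longlongrightarrow> 0) at_top\<close> by simp
  qed (auto intro!: continuous_intros)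
  then have "gauss_integral c (pderiv p - smult (2 * c) ([:0, 1:] * p)) = 0"
    by (simp add: gauss_integral_def interval_lebesgue_integral_def set_lebesgue_integral_def)
  then show ?thesis
    by (simp only: gauss_integral_diff[OF c] gauss_integral_smult)
qed

lemma gauss_integral_pderiv_mult:
  assumes "c > 0"
  shows "gauss_integral c (pderiv p * q)
    = gauss_integral c (p * (smult (2 * c) ([:0, 1:] * q) - pderiv q))"
proof -
  have "p * (smult (2 * c) ([:0, 1:] * q) - pderiv q)
      = smult (2 * c) ([:0, 1:] * (p * q)) - p * pderiv q"
    by (simp add: algebra_simps)
  moreover have "pderiv p * q = pderiv (p * q) - p * pderiv q"
    by (simp add: pderiv_mult algebra_simps)
  ultimately show ?thesis
    using assms by (simp only: gauss_integral_diff gauss_integral_smult gauss_integral_pderiv)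
qed

lemma gauss_integral_odd:
  assumes "\<And>x. poly p (- x) = - poly p x"
  shows "gauss_integral c p = 0"
proof -
  have "gauss_integral c p
      = \<bar>-1\<bar> *\<^sub>R (\<integral>x. poly p (0 + (-1) * x) * exp (- c * (0 + (-1) * x)\<^sup>2) \<partial>lborel)"
    unfolding gauss_integral_def by (rule lborel_integral_real_affine) simp
  also have "\<dots> = - gauss_integral c p"
    using assms by (simp add: gauss_integral_def)
  finally show ?thesis
    by simp
qed

lemma gauss_integral_1:
  fixes c :: real
  assumes "c > 0"
  shows "gauss_integral c 1 = sqrt (pi / c)"
proof -
  have "1 = (\<integral>x. normal_density 0 (1 / sqrt (2 * c)) x \<partial>lborel)"
    using assms by (intro integral_normal_density[symmetric]) simp
  also have "\<dots> = sqrt (c / pi) * gauss_integral c 1"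
    unfolding normal_density_eq_gaussian[OF assms] gauss_integral_def by simp
  finally show ?thesis
    using assms by (simp add: field_simps real_sqrt_divide)
qed

definition scaled_hermite_poly :: "real \<Rightarrow> nat \<Rightarrow> real poly" where
  "scaled_hermite_poly b k = smult (hermite_norm b k) (pcompose (hermite_poly k) [:0, b / sqrt 2:])"

lemma poly_scaled_hermite_poly:
  "poly (scaled_hermite_poly b k) v = hermite_norm b k * poly (hermite_poly k) (b * v / sqrt 2)"
  by (simp add: scaled_hermite_poly_def poly_pcompose ac_simps)

lemma scaled_hermite_eq_poly: "scaled_hermite b k = poly (scaled_hermite_poly b k)"
  by (simp add: fun_eq_iff scaled_hermite_def poly_scaled_hermite_poly hermite_eq_poly)

lemma scaled_hermite_fun_eq_poly:
  "scaled_hermite_fun b k v = poly (scaled_hermite_poly b k) v * exp (- (b\<^sup>2 / 2) * v\<^sup>2)"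
  by (simp add: scaled_hermite_fun_def poly_scaled_hermite_poly hermite_eq_poly)

lemma hermite_norm_Suc: "sqrt (real k + 1) * hermite_norm b (Suc k) = hermite_norm b k / sqrt 2"
proof -
  have "sqrt (2 ^ Suc k * fact (Suc k)) = sqrt 2 * sqrt (real k + 1) * sqrt (2 ^ k * fact k)"
    by (simp add: real_sqrt_mult[symmetric] algebra_simps)
  then show ?thesis
    by (simp add: hermite_norm_def field_simps)
qed

lemma hermite_norm_pred:
  "sqrt (real k) * hermite_norm b (k - 1) = sqrt 2 * real k * hermite_norm b k"
proof (cases k)
  case (Suc n)
  then have "hermite_norm b (k - 1) = sqrt 2 * sqrt (real k) * hermite_norm b k"
    using hermite_norm_Suc[of n b] by (simp add: field_simps)
  then have "sqrt (real k) * hermite_norm b (k - 1)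
      = sqrt 2 * (sqrt (real k) * sqrt (real k)) * hermite_norm b k"
    by (simp only: mult_ac)
  then show ?thesis
    by simp
qed simp

lemma scaled_hermite_poly_Suc:
  "smult (sqrt (real k + 1)) (scaled_hermite_poly b (Suc k))
     = [:0, b:] * scaled_hermite_poly b k - smult (sqrt (real k)) (scaled_hermite_poly b (k - 1))"
    (is "?lhs = ?rhs")
proof (rule poly_eq_poly_eq_iff[THEN iffD1], rule ext)
  fix v
  let ?H = "\<lambda>n. poly (hermite_poly n) (b * v / sqrt 2)"
  have "poly ?lhs v
      = hermite_norm b k / sqrt 2 * (2 * (b * v / sqrt 2) * ?H k - 2 * real k * ?H (k - 1))"
    by (simp add: poly_scaled_hermite_poly hermite_poly_Suc hermite_norm_Suc[symmetric])
  also have "\<dots>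
      = b * v * (hermite_norm b k * ?H k) - sqrt 2 * real k * hermite_norm b k * ?H (k - 1)"
    by (simp add: field_simps)
  also have "\<dots> = poly ?rhs v"
    by (simp add: poly_scaled_hermite_poly hermite_norm_pred[symmetric])
  finally show "poly ?lhs v = poly ?rhs v" .
qed

lemma pderiv_scaled_hermite_poly:
  "pderiv (scaled_hermite_poly b k) = smult (b * sqrt (real k)) (scaled_hermite_poly b (k - 1))"
    (is "?lhs = ?rhs")
proof (rule poly_eq_poly_eq_iff[THEN iffD1], rule ext)
  fix v
  let ?H = "poly (hermite_poly (k - 1)) (b * v / sqrt 2)"
  have "poly ?lhs v = hermite_norm b k * (2 * real k * ?H) * (b / sqrt 2)"
    by (simp add: scaled_hermite_poly_def pderiv_smult pderiv_pcompose pderiv_hermite_poly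
        poly_pcompose pderiv_pCons ac_simps)
  also have "\<dots> = b * (sqrt 2 * real k * hermite_norm b k) * ?H"
    by (simp add: field_simps)
  also have "\<dots> = poly ?rhs v"
    by (simp add: poly_scaled_hermite_poly hermite_norm_pred[symmetric])
  finally show "poly ?lhs v = poly ?rhs v" .
qed

lemma scaled_hermite_poly_raising:
  "smult (b\<^sup>2) ([:0, 1:] * scaled_hermite_poly b k) - pderiv (scaled_hermite_poly b k)
     = smult (b * sqrt (real k + 1)) (scaled_hermite_poly b (Suc k))"
    (is "?lhs = ?rhs")
proof (rule poly_eq_poly_eq_iff[THEN iffD1], rule ext)
  fix v
  have "poly (smult (sqrt (real k + 1)) (scaled_hermite_poly b (Suc k))) v
      = poly ([:0, b:] * scaled_hermite_poly b k
          - smult (sqrt (real k)) (scaled_hermite_poly b (k - 1))) v"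
    by (simp only: scaled_hermite_poly_Suc)
  then show "poly ?lhs v = poly ?rhs v"
    by (simp add: pderiv_scaled_hermite_poly power2_eq_square algebra_simps)
      (simp add: distrib_left[symmetric])
qed

lemma scaled_hermite_poly_minus:
  "poly (scaled_hermite_poly b k) (- v) = (-1) ^ k * poly (scaled_hermite_poly b k) v"
  using hermite_poly_minus[of k "b * v / sqrt 2"] by (simp add: poly_scaled_hermite_poly)

definition Tcoef_nat :: "real \<Rightarrow> real \<Rightarrow> nat \<Rightarrow> nat \<Rightarrow> real" where
  "Tcoef_nat b b' l k =
     gauss_integral (b\<^sup>2 / 2) (scaled_hermite_poly b' l * scaled_hermite_poly b k)"

lemma Tcoef_of_nat: "Tcoef b b' (int l) (int k) = Tcoef_nat b b' l k"
  by (simp add: Tcoef_def Tcoef_nat_def gauss_integral_def scaled_hermite_eq_poly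
      scaled_hermite_fun_eq_poly mult.assoc)

lemma Tcoef_nat_ladder:
  assumes "b > 0"
  shows "b' * sqrt (real l) * Tcoef_nat b b' (l - 1) k
    = b * sqrt (real k + 1) * Tcoef_nat b b' l (Suc k)"
proof -
  have c: "b\<^sup>2 / 2 > 0"
    using assms by simp
  have "b' * sqrt (real l) * Tcoef_nat b b' (l - 1) k
      = gauss_integral (b\<^sup>2 / 2) (pderiv (scaled_hermite_poly b' l) * scaled_hermite_poly b k)"
    unfolding Tcoef_nat_def pderiv_scaled_hermite_poly mult_smult_left gauss_integral_smult ..
  also have "\<dots> = gauss_integral (b\<^sup>2 / 2) (scaled_hermite_poly b' l
      * (smult (2 * (b\<^sup>2 / 2)) ([:0, 1:] * scaled_hermite_poly b k)
         - pderiv (scaled_hermite_poly b k)))"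
    by (rule gauss_integral_pderiv_mult[OF c])
  also have "\<dots> = b * sqrt (real k + 1) * Tcoef_nat b b' l (Suc k)"
    using scaled_hermite_poly_raising[of b k]
    by (simp add: Tcoef_nat_def mult_smult_right gauss_integral_smult)
  finally show ?thesis .
qed

lemma Tcoef_nat_shift:
  "b > 0 \<Longrightarrow> b' * sqrt (real l + 1) * Tcoef_nat b b' l k
    = b * sqrt (real k + 1) * Tcoef_nat b b' (Suc l) (Suc k)"
  using Tcoef_nat_ladder[of b b' "Suc l" k] by (simp add: add.commute)

lemma Tcoef_nat_0_Suc: "b > 0 \<Longrightarrow> Tcoef_nat b b' 0 (Suc k) = 0"
  using Tcoef_nat_ladder[of b b' 0 k] by simp

lemma Tcoef_nat_eq_0_if_less: "b > 0 \<Longrightarrow> l < k \<Longrightarrow> Tcoef_nat b b' l k = 0"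
proof (induction l arbitrary: k)
  case 0
  then show ?case
    using Tcoef_nat_0_Suc by (cases k) auto
next
  case (Suc l)
  then obtain m where "k = Suc m" "l < m"
    by (cases k) auto
  then show ?case
    using Suc Tcoef_nat_shift[of b b' l m] by simp
qed

lemma Tcoef_nat_eq_0_if_odd:
  assumes "odd (l + k)"
  shows "Tcoef_nat b b' l k = 0"
proof -
  have "(-1) ^ l * (-1) ^ k = (-1 :: real)"
    using assms by (simp add: power_add[symmetric])
  moreover have "poly (scaled_hermite_poly b' l * scaled_hermite_poly b k) (- x)
      = ((-1) ^ l * (-1) ^ k) * poly (scaled_hermite_poly b' l * scaled_hermite_poly b k) x" for x
    by (simp add: scaled_hermite_poly_minus mult_ac)
  ultimately show ?thesis
    unfolding Tcoef_nat_def by (intro gauss_integral_odd) simp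
qed

lemma Tcoef_nat_0_0:
  assumes "b > 0" "b' > 0"
  shows "Tcoef_nat b b' 0 0 = sqrt (b' / b)"
proof -
  have "scaled_hermite_poly b' 0 * scaled_hermite_poly b 0
      = smult (hermite_norm b' 0 * hermite_norm b 0) 1"
    by (simp add: scaled_hermite_poly_def one_pCons pcompose_const)
  moreover have "b\<^sup>2 / 2 > 0"
    using assms by simp
  ultimately have "Tcoef_nat b b' 0 0
      = hermite_norm b' 0 * hermite_norm b 0 * sqrt (pi / (b\<^sup>2 / 2))"
    by (simp only: Tcoef_nat_def gauss_integral_smult gauss_integral_1 mult_1_right)
  also have "\<dots> = sqrt b' * sqrt b / ((2 * pi) powr (1/4) * (2 * pi) powr (1/4))
      * (sqrt (2 * pi) / b)"
    using assms by (simp add: hermite_norm_def real_sqrt_divide real_sqrt_mult)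
  also have "(2 * pi) powr (1/4) * (2 * pi) powr (1/4) = sqrt (2 * pi)"
    by (simp add: powr_add[symmetric] powr_half_sqrt)
  also have "sqrt b' * sqrt b / sqrt (2 * pi) * (sqrt (2 * pi) / b) = sqrt b' / sqrt b"
    using assms by (simp add: field_simps)
  finally show ?thesis
    by (simp add: real_sqrt_divide)
qed

lemma Tcoef_nat_diag:
  assumes "b > 0" "b' > 0"
  shows "Tcoef_nat b b' l l = (b' / b) powr (real l + 1/2)"
proof (induction l)
  case 0
  then show ?case
    using assms by (simp add: Tcoef_nat_0_0 powr_half_sqrt)
next
  case (Suc l)
  have "(b' / b) powr (real (Suc l) + 1/2) = (b' / b) powr 1 * (b' / b) powr (real l + 1/2)"
    by (subst powr_add[symmetric]) (simp add: add_ac)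
  then show ?case
    using Suc Tcoef_nat_shift[of b b' l l] assms by (simp add: field_simps)
qed

lemma Tcoef_nat_rec:
  assumes "b > 0"
  shows "sqrt (real l + 1) * Tcoef_nat b b' (Suc l) k
    = b' / b * (sqrt (real k + 1) * Tcoef_nat b b' l (Suc k)
                + sqrt (real k) * Tcoef_nat b b' l (k - 1))
      - sqrt (real l) * Tcoef_nat b b' (l - 1) k"
proof -
  let ?P = "scaled_hermite_poly b'" and ?Q = "scaled_hermite_poly b"
  let ?lhs = "smult (sqrt (real l + 1)) (?P (Suc l)) * ?Q k"
  let ?rhs = "smult (b' / b) (?P l * smult (sqrt (real k + 1)) (?Q (Suc k))
                + ?P l * smult (sqrt (real k)) (?Q (k - 1)))
              - smult (sqrt (real l)) (?P (l - 1) * ?Q k)"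
  have c: "b\<^sup>2 / 2 > 0"
    using assms by simp
  have "poly ?lhs v = poly ?rhs v" for v
  proof -
    have rec_P: "sqrt (real l + 1) * poly (?P (Suc l)) v
        = b' * v * poly (?P l) v - sqrt (real l) * poly (?P (l - 1)) v"
      using arg_cong[OF scaled_hermite_poly_Suc[of l b'], of "\<lambda>p. poly p v"] by simp
    have rec_Q: "b * v * poly (?Q k) v
        = sqrt (real k + 1) * poly (?Q (Suc k)) v + sqrt (real k) * poly (?Q (k - 1)) v"
      using arg_cong[OF scaled_hermite_poly_Suc[of k b], of "\<lambda>p. poly p v"] by simp
    have "poly ?lhs v
        = (b' * v * poly (?P l) v - sqrt (real l) * poly (?P (l - 1)) v) * poly (?Q k) v"
      by (simp only: poly_mult poly_smult rec_P)
    also have "\<dots> = b' / b * poly (?P l) v * (b * v * poly (?Q k) v)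
        - sqrt (real l) * poly (?P (l - 1)) v * poly (?Q k) v"
      using assms by (simp add: field_simps)
    also have "\<dots> = poly ?rhs v"
      unfolding rec_Q by (simp add: algebra_simps)
    finally show ?thesis .
  qed
  then have "?lhs = ?rhs"
    by (intro poly_eq_poly_eq_iff[THEN iffD1] ext)
  from arg_cong[OF this, of "gauss_integral (b\<^sup>2 / 2)"] show ?thesis
    unfolding Tcoef_nat_def
    by (simp only: gauss_integral_add[OF c] gauss_integral_diff[OF c] gauss_integral_smult
        mult_smult_left mult_smult_right)
qed

lemma Tcoef_nat_off_diag:
  assumes b: "b > 0" and b': "b' > 0"
  shows "(real l + 1 - real k) * Tcoef_nat b b' (Suc l) k
    = sqrt ((real l + 1) * (real k + 1)) * (b' / b - b / b') * Tcoef_nat b b' l (Suc k)"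
proof -
  define s t where "s = sqrt (real l + 1)" and "t = sqrt (real k + 1)"
  let ?T = "Tcoef_nat b b' (Suc l) k" and ?A = "Tcoef_nat b b' l (Suc k)"
  have s: "s > 0" "s * s = real l + 1"
    by (simp_all add: s_def)
  have lower_k: "sqrt (real k) * Tcoef_nat b b' l (k - 1) = b * real k / (b' * s) * ?T"
  proof (cases k)
    case (Suc j)
    then have "Tcoef_nat b b' l (k - 1) = b * sqrt (real k) / (b' * s) * ?T"
      using Tcoef_nat_shift[of b b' l j] b b' s by (simp add: s_def field_simps)
    then have "sqrt (real k) * Tcoef_nat b b' l (k - 1)
        = b * (sqrt (real k) * sqrt (real k)) / (b' * s) * ?T"
      by (simp only: times_divide_eq_right mult_ac)
    then show ?thesis
      by simp
  qed simp
  have lower_l: "sqrt (real l) * Tcoef_nat b b' (l - 1) k = b * t / b' * ?A"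
    using Tcoef_nat_ladder[OF b, of b' l k] b' by (simp add: t_def field_simps)
  have "s * ?T = b' / b * (t * ?A + sqrt (real k) * Tcoef_nat b b' l (k - 1))
      - sqrt (real l) * Tcoef_nat b b' (l - 1) k"
    using Tcoef_nat_rec[OF b, of l b' k] unfolding s_def t_def .
  also have "\<dots> = b' / b * t * ?A + real k / s * ?T - b * t / b' * ?A"
    unfolding lower_k lower_l using b b' s by (simp add: field_simps)
  finally have rec: "s * ?T = b' / b * t * ?A + real k / s * ?T - b * t / b' * ?A" .
  have "(real l + 1 - real k) * ?T = s * (s * ?T) - real k * ?T"
    unfolding s(2)[symmetric] by (simp add: algebra_simps)
  also have "\<dots> = s * t * (b' / b - b / b') * ?A"
    unfolding rec using s by (simp add: field_simps)
  also have "s * t = sqrt ((real l + 1) * (real k + 1))"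
    by (simp add: s_def t_def real_sqrt_mult)
  finally show ?thesis .
qed

lemma Tcoef_eq_0:
  fixes l k :: int
  assumes "b > 0" "0 \<le> l" "0 \<le> k" "l < k \<or> odd (l + k)"
  shows "Tcoef b b' l k = 0"
proof -
  obtain n m where "l = int n" "k = int m"
    using assms(2,3) nonneg_int_cases by metis
  then show ?thesis
    using assms Tcoef_nat_eq_0_if_less[of b n m b'] Tcoef_nat_eq_0_if_odd[of n m b b']
    by (auto simp: Tcoef_of_nat simp flip: of_nat_add)
qed

lemma Tcoef_shift:
  fixes l k :: int
  assumes "b > 0" "b' > 0" "0 \<le> l" "0 \<le> k"
  shows "Tcoef b b' l k
    = b / b' * sqrt (real_of_int (k + 1) / (real_of_int l + 1)) * Tcoef b b' (l + 1) (k + 1)"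
proof -
  obtain n m where nm: "l = int n" "k = int m"
    using assms(3,4) nonneg_int_cases by metis
  have "Tcoef b b' (l + 1) (k + 1) = Tcoef_nat b b' (Suc n) (Suc m)"
    using Tcoef_of_nat[of b b' "Suc n" "Suc m"] nm by (simp add: add.commute)
  then show ?thesis
    using Tcoef_nat_shift[of b b' n m] assms nm
    by (simp add: Tcoef_of_nat real_sqrt_divide field_simps)
qed

lemma Tcoef_diag:
  fixes l :: int
  assumes "b > 0" "b' > 0" "0 \<le> l"
  shows "Tcoef b b' l l = (b' / b) powr (real_of_int l + 1/2)"
proof -
  obtain n where "l = int n"
    using assms(3) nonneg_int_cases by metis
  then show ?thesis
    using assms by (simp add: Tcoef_of_nat Tcoef_nat_diag)
qed

lemma Tcoef_rec:
  fixes l k :: int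
  assumes "b > 0" "1 \<le> l" "0 \<le> k"
  shows "Tcoef b b' l k
    = b' / b * sqrt (real_of_int (k + 1) / real_of_int l) * Tcoef b b' (l - 1) (k + 1)
      + b' / b * sqrt (real_of_int k / real_of_int l) * Tcoef b b' (l - 1) (k - 1)
      - sqrt ((real_of_int l - 1) / real_of_int l) * Tcoef b b' (l - 2) k"
proof -
  define n where "n = nat (l - 1)"
  obtain m where k: "k = int m"
    using assms(3) nonneg_int_cases by metis
  have l: "l = int (Suc n)"
    using assms(2) by (simp add: n_def)
  define s where "s = sqrt (real n + 1)"
  have s: "s > 0"
    by (simp add: s_def)
  have "Tcoef b b' l k = Tcoef_nat b b' (Suc n) m"
    unfolding l k Tcoef_of_nat ..
  moreover have "sqrt ((k + 1) / l) * Tcoef b b' (l - 1) (k + 1)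
      = sqrt (real m + 1) / s * Tcoef_nat b b' n (Suc m)"
    using Tcoef_of_nat[of b b' n "Suc m"] l k by (simp add: s_def real_sqrt_divide add.commute)
  moreover have "sqrt (k / l) * Tcoef b b' (l - 1) (k - 1)
      = sqrt (real m) / s * Tcoef_nat b b' n (m - 1)"
  proof (cases m)
    case (Suc j)
    then show ?thesis
      using Tcoef_of_nat[of b b' n j] l k by (simp add: s_def real_sqrt_divide add.commute)
  qed (simp add: k)
  moreover have "sqrt ((l - 1) / l) * Tcoef b b' (l - 2) k
      = sqrt (real n) / s * Tcoef_nat b b' (n - 1) m"
  proof (cases n)
    case (Suc j)
    then have "l - 2 = int j"
      using l by simp
    then show ?thesis
      using Tcoef_of_nat[of b b' j m] l k Suc by (simp add: s_def real_sqrt_divide add.commute)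
  qed (simp add: l s_def)
  moreover have "Tcoef_nat b b' (Suc n) m
      = (b' / b * (sqrt (real m + 1) * Tcoef_nat b b' n (Suc m)
                   + sqrt (real m) * Tcoef_nat b b' n (m - 1))
         - sqrt (real n) * Tcoef_nat b b' (n - 1) m) / s"
    using Tcoef_nat_rec[OF assms(1), of n b' m] s by (simp add: s_def field_simps)
  ultimately show ?thesis
    using s by (simp only: mult.assoc) (simp add: field_simps add_divide_distrib)
qed

lemma Tcoef_off_diag:
  fixes l k :: int
  assumes "b > 0" "b' > 0" "1 \<le> l" "0 \<le> k" "l \<noteq> k"
  shows "Tcoef b b' l k = sqrt (real_of_int (l * (k + 1))) / real_of_int (l - k)
    * (b' / b - b / b') * Tcoef b b' (l - 1) (k + 1)"
proof -
  define n where "n = nat (l - 1)"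
  obtain m where k: "k = int m"
    using assms(4) nonneg_int_cases by metis
  have l: "l = int (Suc n)"
    using assms(3) by (simp add: n_def)
  have "real n + 1 - real m \<noteq> 0"
    using assms(5) l k by linarith
  then have "Tcoef_nat b b' (Suc n) m = sqrt ((real n + 1) * (real m + 1)) / (real n + 1 - real m)
      * (b' / b - b / b') * Tcoef_nat b b' n (Suc m)"
    using Tcoef_nat_off_diag[OF assms(1,2), of n m] by (simp add: field_simps)
  moreover have "sqrt (l * (k + 1)) / (l - k)
      = sqrt ((real n + 1) * (real m + 1)) / (real n + 1 - real m)"
    using l k by (simp add: add.commute)
  moreover have "Tcoef b b' (l - 1) (k + 1) = Tcoef_nat b b' n (Suc m)"
    using Tcoef_of_nat[of b b' n "Suc m"] l k by (simp add: add.commute)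
  moreover have "Tcoef b b' l k = Tcoef_nat b b' (Suc n) m"
    unfolding l k Tcoef_of_nat ..
  ultimately show ?thesis
    by simp
qed

theorem proposition3p1:
  fixes \<beta> \<beta>' :: real
  assumes "\<beta> > 0" and "\<beta>' > 0"
  shows "(\<forall>l k::int. 0 \<le> l \<and> 0 \<le> k \<and> (l < k \<or> odd (l + k)) \<longrightarrow> Tcoef \<beta> \<beta>' l k = 0)
    \<and> (\<forall>l k::int. 0 \<le> l \<and> 0 \<le> k \<longrightarrow>
         Tcoef \<beta> \<beta>' l k = \<beta> / \<beta>' * sqrt ((k + 1) / (l + 1)) * Tcoef \<beta> \<beta>' (l + 1) (k + 1))
    \<and> (\<forall>l::int. 0 \<le> l \<longrightarrow> Tcoef \<beta> \<beta>' l l = (\<beta>' / \<beta>) powr (l + 1/2))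
    \<and> (\<forall>l k::int. 1 \<le> l \<and> 0 \<le> k \<longrightarrow>
         Tcoef \<beta> \<beta>' l k = \<beta>' / \<beta> * sqrt ((k + 1) / l) * Tcoef \<beta> \<beta>' (l - 1) (k + 1)
           + \<beta>' / \<beta> * sqrt (k / l) * Tcoef \<beta> \<beta>' (l - 1) (k - 1)
           - sqrt ((l - 1) / l) * Tcoef \<beta> \<beta>' (l - 2) k)
    \<and> (\<forall>l k::int. 1 \<le> l \<and> 0 \<le> k \<and> l \<noteq> k \<longrightarrow>
         Tcoef \<beta> \<beta>' l k = sqrt (l * (k + 1)) / (l - k) * (\<beta>' / \<beta> - \<beta> / \<beta>')
           * Tcoef \<beta> \<beta>' (l - 1) (k + 1))"
  by (intro conjI allI impI; (elim conjE)?)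
    (rule Tcoef_eq_0 Tcoef_shift Tcoef_diag Tcoef_rec Tcoef_off_diag; (rule assms | assumption))+

end
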